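(* Let $\alpha>0$. The constraints of the optimization problem below (namely $Q>0$, $U>0$, $\Delta(Q)<0$, $\mathrm{He}\begin{bmatrix}\alpha Q+AQ+BW & B(X-U)\\ W+Y & X-U\end{bmatrix}<0$ and $\begin{bmatrix}\bar u^2 & Y\\ Y^\top & Q\end{bmatrix}\geq 0$) are feasible if and only if $\alpha>\omega$.
   Context: Let $g>0$ (gravity acceleration), $z_c>0$ (constant center-of-mass height) and $\omega:=\sqrt{g/z_c}$. Let $A:=\begin{bmatrix}0&1\\ \omega^2&0\end{bmatrix}$ and $B:=\begin{bmatrix}0\\ -\omega^2\end{bmatrix}$ (linear inverted pendulum dynamics $\dot x=Ax+Bu$). Let $\bar r>0$ (half-step size), $\bar v>0$ (peak forward speed) and $T>0$ (step period) be related by $\bar v=\omega\bar r\,\frac{\cosh(\omega T)+1}{\sinh(\omega T)}$, equivalently $T=\frac1\omega\ln\!\big(\frac{\bar v/\omega+\bar r}{\bar v/\omega-\bar r}\big)$; in particular $\bar v/\omega-\bar r>0$. Define $\xi:=\frac{\bar r\omega}{\bar v/\omega-\bar r}>0$, and let $\bar u>0$ (saturation level, half of the foot length). For $M$ square, $\mathrm{He}(M):=M+M^\top$. Consider the convex problem: maximize $\log\det(Q)$ over a symmetric $Q=\begin{bmatrix}q_{11}&q_{12}\\ q_{12}&q_{22}\end{bmatrix}\in\mathbb R^{2\times2}$, row vectors $W,Y\in\mathbb R^{1\times 2}$ and scalars $U,X\in\mathbb R$, subject to $Q>0$, $U>0$, $\Delta(Q)<0$, $\mathrm{He}\begin{bmatrix}\alpha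 Q+AQ+BW & B(X-U)\\ W+Y & X-U\end{bmatrix}<0$, $\begin{bmatrix}\bar u^2 & Y\\ Y^\top & Q\end{bmatrix}\geq0$, where $\Delta(Q):=\begin{bmatrix}\Delta_{11}&\Delta_{12}\\ \Delta_{12}&\Delta_{22}\end{bmatrix}$ with $\Delta_{11}:=(\mathrm{e}^{2(\omega-\alpha)T}-1)q_{22}+4\mathrm{e}^{-2\alpha T}\xi(\xi q_{11}-\mathrm{e}^{\omega T}q_{12})$, $\Delta_{12}:=2\mathrm{e}^{-2\alpha T}\xi q_{11}+(\mathrm{e}^{-(\omega+2\alpha)T}-1)q_{12}$, $\Delta_{22}:=(\mathrm{e}^{-2\alpha T}-1)q_{11}$. *)

theory Defs
  imports "HOL-Analysis.Analysis"
begin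

(* Matrix sign conditions (applied only to symmetric matrices below):
   M > 0, M >= 0, M < 0 in the usual quadratic-form sense. *)
definition pos_def_mat :: "real^'n^'n \<Rightarrow> bool" where
  "pos_def_mat M \<longleftrightarrow> (\<forall>x. x \<noteq> 0 \<longrightarrow> x \<bullet> (M *v x) > 0)"

definition psd_mat :: "real^'n^'n \<Rightarrow> bool" where
  "psd_mat M \<longleftrightarrow> (\<forall>x. x \<bullet> (M *v x) \<ge> 0)"

definition neg_def_mat :: "real^'n^'n \<Rightarrow> bool" where
  "neg_def_mat M \<longleftrightarrow> (\<forall>x. x \<noteq> 0 \<longrightarrow> x \<bullet> (M *v x) < 0)"

definition He :: "real^'n^'n \<Rightarrow> real^'n^'n" where
  "He M = M + transpose M"

definition mat2 :: "real \<Rightarrow> real \<Rightarrow> real \<Rightarrow> real \<Rightarrow> real^2^2" where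
  "mat2 a b c d = vector [vector [a, b], vector [c, d]]"

definition blk3 :: "real^2^2 \<Rightarrow> real^2 \<Rightarrow> real^2 \<Rightarrow> real \<Rightarrow> real^3^3" where
  "blk3 P b c d = vector [vector [P$1$1, P$1$2, b$1],
                          vector [P$2$1, P$2$2, b$2],
                          vector [c$1, c$2, d]]"

definition outer2 :: "real^2 \<Rightarrow> real^2 \<Rightarrow> real^2^2" where
  "outer2 b w = (\<chi> i j. b$i * w$j)"

definition lipA :: "real \<Rightarrow> real^2^2" where
  "lipA \<omega> = mat2 0 1 (\<omega>^2) 0"

definition lipB :: "real \<Rightarrow> real^2" where
  "lipB \<omega> = vector [0, - (\<omega>^2)]"

definition Delta :: "real \<Rightarrow> real \<Rightarrow> real \<Rightarrow> real \<Rightarrow> real \<Rightarrow> real \<Rightarrow> real \<Rightarrow> real^2^2" where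
  "Delta \<alpha> \<omega> T \<xi> q11 q12 q22 =
    (let d11 = (exp (2*(\<omega> - \<alpha>)*T) - 1) * q22
               + 4 * exp (-2*\<alpha>*T) * \<xi> * (\<xi> * q11 - exp (\<omega>*T) * q12);
         d12 = 2 * exp (-2*\<alpha>*T) * \<xi> * q11 + (exp (-(\<omega> + 2*\<alpha>)*T) - 1) * q12;
         d22 = (exp (-2*\<alpha>*T) - 1) * q11
     in mat2 d11 d12 d12 d22)"

definition lmi_feasible :: "real \<Rightarrow> real \<Rightarrow> real \<Rightarrow> real \<Rightarrow> real \<Rightarrow> bool" where
  "lmi_feasible \<alpha> \<omega> T \<xi> ubar \<longleftrightarrow>
    (\<exists>q11 q12 q22 (W::real^2) (Y::real^2) (U::real) (X::real).
       let Q = mat2 q11 q12 q12 q22 in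
       pos_def_mat Q \<and> U > 0 \<and>
       neg_def_mat (Delta \<alpha> \<omega> T \<xi> q11 q12 q22) \<and>
       neg_def_mat (He (blk3 (\<alpha> *\<^sub>R Q + lipA \<omega> ** Q + outer2 (lipB \<omega>) W)
                             ((X - U) *\<^sub>R lipB \<omega>) (W + Y) (X - U))) \<and>
       psd_mat (vector [vector [ubar^2, Y$1, Y$2],
                        vector [Y$1, Q$1$1, Q$1$2],
                        vector [Y$2, Q$2$1, Q$2$2]] :: real^3^3))"

end

theory Submission
  imports Defs
begin

text \<open>
  Necessity: diagonal entries of definite matrices carry their sign. Positivity of \<open>Q\<close> and
  the (1,1) entry of the \<open>He\<close> block give \<open>q11 > 0\<close>, \<open>q22 > 0\<close> and \<open>q12 < -\<alpha> q11 < 0\<close>;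
  as \<open>\<xi> \<ge> 0\<close>, the \<open>\<xi>\<close>-term of \<open>\<Delta>\<^sub>1\<^sub>1\<close> is then nonnegative, so \<open>\<Delta>\<^sub>1\<^sub>1 < 0\<close> forces
  \<open>exp (2(\<omega> - \<alpha>)T) < 1\<close>, i.e. \<open>\<alpha> > \<omega>\<close>.

  Sufficiency: for \<open>\<alpha> > \<omega>\<close> take \<open>Q = \<lambda> [[1, -\<beta>], [-\<beta>, N]]\<close> with \<open>\<beta> = \<alpha> + 1\<close>.
  The gain \<open>W\<close> can be chosen to make the \<open>He\<close> block diagonal with negative diagonal, and
  \<open>Y\<close> to cancel its border. \<open>\<Delta>\<close> is homogeneous in \<open>Q\<close>, and for \<open>\<lambda> = 1\<close> it is negative
  definite once \<open>N\<close> is large, because \<open>\<Delta>\<^sub>1\<^sub>1\<close> decreases in \<open>q22\<close> with slope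
  \<open>exp (2(\<omega> - \<alpha>)T) - 1 < 0\<close> while \<open>\<Delta>\<^sub>1\<^sub>2\<close> and \<open>\<Delta>\<^sub>2\<^sub>2 < 0\<close> do not depend on it.
  Since \<open>Y\<close> and \<open>Q\<close> scale with \<open>\<lambda>\<close>, the saturation constraint holds for \<open>\<lambda>\<close> small.
\<close>

lemma pos_def_mat_diag_pos:
  assumes "pos_def_mat M"
  shows "0 < M $ i $ i"
  using assms[unfolded pos_def_mat_def, rule_format, of "axis i 1"]
  by (simp add: matrix_vector_mult_basis inner_axis' column_def axis_eq_0_iff)

lemma neg_def_mat_diag_neg:
  assumes "neg_def_mat M"
  shows "M $ i $ i < 0"
  using assms[unfolded neg_def_mat_def, rule_format, of "axis i 1"]
  by (simp add: matrix_vector_mult_basis inner_axis' column_def axis_eq_0_iff)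

lemma neg_def_mat_scaleR:
  assumes "0 < c" "neg_def_mat M"
  shows "neg_def_mat (c *\<^sub>R M)"
  using assms by (simp add: neg_def_mat_def scaleR_matrix_vector_assoc[symmetric] mult_pos_neg)

lemma neg_def_mat_diagonal:
  fixes M :: "real^'n^'n"
  assumes "\<forall>i. M $ i $ i < 0" and "\<forall>i j. i \<noteq> j \<longrightarrow> M $ i $ j = 0"
  shows "neg_def_mat M"
  unfolding neg_def_mat_def
proof (intro allI impI)
  fix x :: "real^'n"
  assume "x \<noteq> 0"
  then obtain k where "x $ k \<noteq> 0"
    by (auto simp: vec_eq_iff)
  have row: "(M *v x) $ i = M $ i $ i * x $ i" for i
  proof -
    have "(M *v x) $ i = (\<Sum>j\<in>UNIV. M $ i $ j * x $ j)"
      by (simp add: matrix_vector_mult_def)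
    also have "\<dots> = (\<Sum>j\<in>UNIV. if j = i then M $ i $ i * x $ i else 0)"
      by (rule sum.cong) (use assms(2) in auto)
    finally show ?thesis
      by simp
  qed
  have "x \<bullet> (M *v x) = (\<Sum>i\<in>UNIV. M $ i $ i * (x $ i)\<^sup>2)"
    by (simp add: inner_vec_def row power2_eq_square mult_ac)
  also have "\<dots> < 0"
  proof -
    have "M $ i $ i * (x $ i)\<^sup>2 \<le> 0" for i
      using assms(1) by (meson less_imp_le mult_nonpos_nonneg zero_le_power2)
    moreover have "M $ k $ k * (x $ k)\<^sup>2 < 0"
      using assms(1) \<open>x $ k \<noteq> 0\<close> by (simp add: mult_neg_pos)
    ultimately have "0 < (\<Sum>i\<in>UNIV. - (M $ i $ i * (x $ i)\<^sup>2))"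
      by (intro sum_pos2[of UNIV k]) auto
    then show ?thesis
      by (simp add: sum_negf)
  qed
  finally show "x \<bullet> (M *v x) < 0" .
qed

lemma mat2_nth [simp]:
  "mat2 a b c d $ 1 $ 1 = a" "mat2 a b c d $ 1 $ 2 = b"
  "mat2 a b c d $ 2 $ 1 = c" "mat2 a b c d $ 2 $ 2 = d"
  by (simp_all add: mat2_def)

lemma inner_mat2_mult:
  "x \<bullet> (mat2 a b c d *v x) = a * (x $ 1)\<^sup>2 + (b + c) * (x $ 1 * x $ 2) + d * (x $ 2)\<^sup>2"
  by (simp add: mat2_def inner_vec_def matrix_vector_mult_def sum_2 algebra_simps power2_eq_square)

lemma inner_mat3_mult:
  "x \<bullet> ((vector [vector [a, b, c], vector [d, e, f], vector [g, h, k]] :: real^3^3) *v x)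
    = a * (x $ 1)\<^sup>2 + e * (x $ 2)\<^sup>2 + k * (x $ 3)\<^sup>2
      + (b + d) * (x $ 1 * x $ 2) + (c + g) * (x $ 1 * x $ 3) + (f + h) * (x $ 2 * x $ 3)"
  by (simp add: inner_vec_def matrix_vector_mult_def sum_3 algebra_simps power2_eq_square)

lemma binary_quadratic_form_pos:
  fixes a b c x y :: real
  assumes "0 < a" "b\<^sup>2 < a * c" "x \<noteq> 0 \<or> y \<noteq> 0"
  shows "0 < a * x\<^sup>2 + 2 * b * (x * y) + c * y\<^sup>2"
proof -
  have "a * (a * x\<^sup>2 + 2 * b * (x * y) + c * y\<^sup>2) = (a * x + b * y)\<^sup>2 + (a * c - b\<^sup>2) * y\<^sup>2"
    by (simp add: algebra_simps power2_eq_square)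
  also have "\<dots> > 0"
    using assms by (cases "y = 0") (auto intro: add_nonneg_pos)
  finally show ?thesis
    using assms(1) by (simp add: zero_less_mult_iff)
qed

lemma pos_def_mat2I:
  assumes "0 < a" "b\<^sup>2 < a * c"
  shows "pos_def_mat (mat2 a b b c)"
  unfolding pos_def_mat_def inner_mat2_mult
proof (intro allI impI)
  fix x :: "real^2"
  assume "x \<noteq> 0"
  then have "x $ 1 \<noteq> 0 \<or> x $ 2 \<noteq> 0"
    by (auto simp: vec_eq_iff forall_2)
  then show "0 < a * (x $ 1)\<^sup>2 + (b + b) * (x $ 1 * x $ 2) + c * (x $ 2)\<^sup>2"
    using binary_quadratic_form_pos[OF assms] by simp
qed

lemma neg_def_mat2I:
  assumes "a < 0" "b\<^sup>2 < a * c"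
  shows "neg_def_mat (mat2 a b b c)"
  unfolding neg_def_mat_def inner_mat2_mult
proof (intro allI impI)
  fix x :: "real^2"
  assume "x \<noteq> 0"
  then have "x $ 1 \<noteq> 0 \<or> x $ 2 \<noteq> 0"
    by (auto simp: vec_eq_iff forall_2)
  then have "0 < (-a) * (x $ 1)\<^sup>2 + 2 * (-b) * (x $ 1 * x $ 2) + (-c) * (x $ 2)\<^sup>2"
    using assms by (intro binary_quadratic_form_pos) auto
  then show "a * (x $ 1)\<^sup>2 + (b + b) * (x $ 1 * x $ 2) + c * (x $ 2)\<^sup>2 < 0"
    by simp
qed

lemma Delta_scale:
  "Delta \<alpha> \<omega> T \<xi> (c * q11) (c * q12) (c * q22) = c *\<^sub>R Delta \<alpha> \<omega> T \<xi> q11 q12 q22"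
  by (simp add: Delta_def Let_def vec_eq_iff forall_2 algebra_simps)

lemma Delta_eventually_neg_def:
  assumes "0 < \<alpha>" "\<omega> < \<alpha>" "0 < T" "0 < q11"
  shows "\<forall>\<^sub>F q22 in at_top. neg_def_mat (Delta \<alpha> \<omega> T \<xi> q11 q12 q22)"
proof -
  define c where "c = 4 * exp (-2*\<alpha>*T) * \<xi> * (\<xi> * q11 - exp (\<omega>*T) * q12)"
  define d12 where "d12 = 2 * exp (-2*\<alpha>*T) * \<xi> * q11 + (exp (-(\<omega> + 2*\<alpha>)*T) - 1) * q12"
  define s where "s = (1 - exp (-2*\<alpha>*T)) * q11"
  define e where "e = 1 - exp (2*(\<omega> - \<alpha>)*T)"
  have "0 < s" "0 < e"
    using assms by (auto simp: s_def e_def intro!: mult_neg_pos)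
  show ?thesis
    unfolding eventually_at_top_linorder
  proof (intro exI allI impI)
    fix q22
    assume "(c + d12\<^sup>2 / s + 1) / e \<le> q22"
    then have "c + d12\<^sup>2 / s + 1 \<le> e * q22"
      using \<open>0 < e\<close> by (simp add: divide_le_eq mult.commute)
    then have d11: "d12\<^sup>2 / s + 1 \<le> - (c - e * q22)"
      by simp
    have "d12\<^sup>2 < (d12\<^sup>2 / s + 1) * s"
      using \<open>0 < s\<close> by (simp add: distrib_right)
    also have "\<dots> \<le> - (c - e * q22) * s"
      using \<open>0 < s\<close> by (intro mult_right_mono d11) simp
    finally have "d12\<^sup>2 < (c - e * q22) * - s"
      by (simp add: algebra_simps)
    moreover have "c - e * q22 < 0"
      using d11 divide_nonneg_pos[OF zero_le_power2 \<open>0 < s\<close>, of d12] by linarith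
    ultimately have "neg_def_mat (mat2 (c - e * q22) d12 d12 (- s))"
      by (intro neg_def_mat2I)
    then show "neg_def_mat (Delta \<alpha> \<omega> T \<xi> q11 q12 q22)"
      unfolding Delta_def Let_def c_def d12_def s_def e_def by (simp add: algebra_simps)
  qed
qed

lemma He_lmi_eq:
  "He (blk3 (\<alpha> *\<^sub>R mat2 q11 q12 q12 q22 + lipA \<omega> ** mat2 q11 q12 q12 q22 + outer2 (lipB \<omega>) W)
            ((X - U) *\<^sub>R lipB \<omega>) (W + Y) (X - U)) =
   vector [vector [2 * (\<alpha> * q11 + q12), 2 * \<alpha> * q12 + q22 + \<omega>\<^sup>2 * (q11 - W $ 1), W $ 1 + Y $ 1],
           vector [2 * \<alpha> * q12 + q22 + \<omega>\<^sup>2 * (q11 - W $ 1), 2 * (\<alpha> * q22 + \<omega>\<^sup>2 * (q12 - W $ 2)),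
                   W $ 2 + Y $ 2 + \<omega>\<^sup>2 * (U - X)],
           vector [W $ 1 + Y $ 1, W $ 2 + Y $ 2 + \<omega>\<^sup>2 * (U - X), 2 * (X - U)]]"
  by (simp add: He_def blk3_def lipA_def lipB_def outer2_def vec_eq_iff forall_3 forall_2
      transpose_def matrix_matrix_mult_def sum_2 mat2_def algebra_simps)

lemma He_lmi_neg_def:
  assumes "\<alpha> * q11 + q12 < 0" "0 < q11" "X < U"
    and "\<omega>\<^sup>2 * (W $ 1 - q11) = 2 * \<alpha> * q12 + q22"
    and "\<omega>\<^sup>2 * (W $ 2 - q12) = \<alpha> * q22 + q11"
    and "W + Y = vector [0, \<omega>\<^sup>2 * (X - U)]"
  shows "neg_def_mat (He (blk3 (\<alpha> *\<^sub>R mat2 q11 q12 q12 q22 + lipA \<omega> ** mat2 q11 q12 q12 q22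
                                + outer2 (lipB \<omega>) W) ((X - U) *\<^sub>R lipB \<omega>) (W + Y) (X - U)))"
proof -
  have "(W + Y) $ 1 = 0" "(W + Y) $ 2 = \<omega>\<^sup>2 * (X - U)"
    using assms(6) by simp_all
  then show ?thesis
    unfolding He_lmi_eq using assms(1-5)
    by (intro neg_def_mat_diagonal) (simp_all add: forall_3 algebra_simps)
qed

lemma psd_mat_bordered:
  fixes u lam \<beta> N y1 y2 :: real
  assumes "0 \<le> lam" "lam * (y1\<^sup>2 + (\<beta> * y1 + y2)\<^sup>2) \<le> u" "\<beta>\<^sup>2 + 1 \<le> N"
  shows "psd_mat (vector [vector [u, lam * y1, lam * y2],
                          vector [lam * y1, lam, - (lam * \<beta>)],
                          vector [lam * y2, - (lam * \<beta>), lam * N]] :: real^3^3)"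
  unfolding psd_mat_def inner_mat3_mult
proof
  fix x :: "real^3"
  define t z1 z2 where "t = x $ 1" and "z1 = x $ 2" and "z2 = x $ 3"
  have "u * t\<^sup>2 + lam * z1\<^sup>2 + lam * N * z2\<^sup>2 + (lam * y1 + lam * y1) * (t * z1)
          + (lam * y2 + lam * y2) * (t * z2) + (- (lam * \<beta>) + - (lam * \<beta>)) * (z1 * z2)
        = lam * (z1 - \<beta> * z2 + y1 * t)\<^sup>2 + lam * (z2 + (\<beta> * y1 + y2) * t)\<^sup>2
          + (u - lam * (y1\<^sup>2 + (\<beta> * y1 + y2)\<^sup>2)) * t\<^sup>2 + lam * (N - \<beta>\<^sup>2 - 1) * z2\<^sup>2"
    by (simp add: algebra_simps power2_eq_square)
  also have "\<dots> \<ge> 0"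
    using assms by (intro add_nonneg_nonneg mult_nonneg_nonneg) auto
  finally show "0 \<le> u * (x $ 1)\<^sup>2 + lam * (x $ 2)\<^sup>2 + lam * N * (x $ 3)\<^sup>2
      + (lam * y1 + lam * y1) * (x $ 1 * x $ 2) + (lam * y2 + lam * y2) * (x $ 1 * x $ 3)
      + (- (lam * \<beta>) + - (lam * \<beta>)) * (x $ 2 * x $ 3)"
    by (simp add: t_def z1_def z2_def)
qed

lemma lmi_feasible_imp_less:
  assumes "lmi_feasible \<alpha> \<omega> T \<xi> ubar" "0 < \<alpha>" "0 < T" "0 \<le> \<xi>"
  shows "\<omega> < \<alpha>"
proof -
  obtain q11 q12 q22 W Y U X where
    Q: "pos_def_mat (mat2 q11 q12 q12 q22)" and
    D: "neg_def_mat (Delta \<alpha> \<omega> T \<xi> q11 q12 q22)" and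
    H: "neg_def_mat (He (blk3 (\<alpha> *\<^sub>R mat2 q11 q12 q12 q22 + lipA \<omega> ** mat2 q11 q12 q12 q22
                              + outer2 (lipB \<omega>) W) ((X - U) *\<^sub>R lipB \<omega>) (W + Y) (X - U)))"
    using assms(1) unfolding lmi_feasible_def Let_def by blast
  have "0 < q11" "0 < q22"
    using pos_def_mat_diag_pos[OF Q, of 1] pos_def_mat_diag_pos[OF Q, of 2] by simp_all
  moreover have "\<alpha> * q11 + q12 < 0"
    using neg_def_mat_diag_neg[OF H, of 1] by (simp add: He_lmi_eq)
  ultimately have "q12 < 0"
    using mult_pos_pos[OF assms(2) \<open>0 < q11\<close>] by linarith
  have "0 \<le> \<xi> * q11 - exp (\<omega>*T) * q12"
    using mult_pos_neg[OF exp_gt_zero \<open>q12 < 0\<close>, of "\<omega> * T"]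
      mult_nonneg_nonneg[OF assms(4) less_imp_le[OF \<open>0 < q11\<close>]]
    by linarith
  then have "0 \<le> 4 * exp (-2*\<alpha>*T) * \<xi> * (\<xi> * q11 - exp (\<omega>*T) * q12)"
    using assms(4) by simp
  moreover have "(exp (2*(\<omega> - \<alpha>)*T) - 1) * q22 + 4 * exp (-2*\<alpha>*T) * \<xi> * (\<xi> * q11 - exp (\<omega>*T) * q12) < 0"
    using neg_def_mat_diag_neg[OF D, of 1] by (simp add: Delta_def Let_def)
  ultimately have "(exp (2*(\<omega> - \<alpha>)*T) - 1) * q22 < 0"
    by linarith
  then have "exp (2*(\<omega> - \<alpha>)*T) < 1"
    using \<open>0 < q22\<close> by (simp add: mult_less_0_iff)
  then show "\<omega> < \<alpha>"
    using assms(3) by (simp add: mult_less_0_iff)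
qed

lemma lmi_feasible_if_less:
  assumes "0 < \<omega>" "\<omega> < \<alpha>" "0 < T" "0 < ubar"
  shows "lmi_feasible \<alpha> \<omega> T \<xi> ubar"
proof -
  define \<beta> where "\<beta> = \<alpha> + 1"
  obtain N where Delta_N: "neg_def_mat (Delta \<alpha> \<omega> T \<xi> 1 (-\<beta>) N)" and N: "\<beta>\<^sup>2 + 1 \<le> N"
  proof -
    have "\<forall>\<^sub>F N in at_top. neg_def_mat (Delta \<alpha> \<omega> T \<xi> 1 (-\<beta>) N) \<and> \<beta>\<^sup>2 + 1 \<le> N"
      using assms by (intro eventually_conj Delta_eventually_neg_def eventually_ge_at_top) auto
    then show ?thesis
      using that eventually_happens'[OF trivial_limit_at_top_linorder] by blast
  qed
  \<comment> \<open>\<open>(w1, w2)\<close> is the gain diagonalizing the \<open>He\<close> block for \<open>\<lambda> = 1\<close>.\<close>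
  define w1 where "w1 = 1 + (N - 2 * \<alpha> * \<beta>) / \<omega>\<^sup>2"
  define w2 where "w2 = (\<alpha> * N + 1) / \<omega>\<^sup>2 - \<beta>"
  define y1 where "y1 = - w1"
  define y2 where "y2 = - w2 - \<omega>\<^sup>2"
  define lam where "lam = ubar\<^sup>2 / (1 + y1\<^sup>2 + (\<beta> * y1 + y2)\<^sup>2)"
  define W Y :: "real^2" where "W = vector [lam * w1, lam * w2]" and "Y = vector [lam * y1, lam * y2]"
  have lam: "0 < lam" "lam * (y1\<^sup>2 + (\<beta> * y1 + y2)\<^sup>2) \<le> ubar\<^sup>2"
    using assms(4) by (auto simp: lam_def field_simps add_pos_nonneg)
  have "(lam * \<beta>)\<^sup>2 < lam\<^sup>2 * N"
    using lam(1) N by (simp add: power_mult_distrib)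
  then have "pos_def_mat (mat2 lam (- (lam * \<beta>)) (- (lam * \<beta>)) (lam * N))"
    using lam(1) by (intro pos_def_mat2I) (simp_all add: power2_eq_square mult.assoc)
  moreover have "neg_def_mat (Delta \<alpha> \<omega> T \<xi> lam (- (lam * \<beta>)) (lam * N))"
    using Delta_scale[of \<alpha> \<omega> T \<xi> lam 1 "-\<beta>" N] neg_def_mat_scaleR[OF lam(1) Delta_N] by simp
  moreover have "neg_def_mat (He (blk3 (\<alpha> *\<^sub>R mat2 lam (- (lam * \<beta>)) (- (lam * \<beta>)) (lam * N)
        + lipA \<omega> ** mat2 lam (- (lam * \<beta>)) (- (lam * \<beta>)) (lam * N) + outer2 (lipB \<omega>) W)
        ((0 - lam) *\<^sub>R lipB \<omega>) (W + Y) (0 - lam)))"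
  proof (rule He_lmi_neg_def)
    have "\<omega>\<^sup>2 * w1 = \<omega>\<^sup>2 + N - 2 * \<alpha> * \<beta>" "\<omega>\<^sup>2 * w2 = \<alpha> * N + 1 - \<omega>\<^sup>2 * \<beta>"
      using assms(1) by (simp_all add: w1_def w2_def field_simps)
    then show "\<omega>\<^sup>2 * (W $ 1 - lam) = 2 * \<alpha> * - (lam * \<beta>) + lam * N"
      "\<omega>\<^sup>2 * (W $ 2 - - (lam * \<beta>)) = \<alpha> * (lam * N) + lam"
      by (simp_all add: W_def algebra_simps) algebra+
  qed (use lam(1) in \<open>simp_all add: W_def Y_def \<beta>_def y1_def y2_def vec_eq_iff forall_2 algebra_simps\<close>)
  moreover have "psd_mat (vector [vector [ubar\<^sup>2, lam * y1, lam * y2],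
                                 vector [lam * y1, lam, - (lam * \<beta>)],
                                 vector [lam * y2, - (lam * \<beta>), lam * N]] :: real^3^3)"
    using lam N by (intro psd_mat_bordered) auto
  ultimately show ?thesis
    unfolding lmi_feasible_def Let_def
    by (intro exI[of _ lam] exI[of _ "- (lam * \<beta>)"] exI[of _ "lam * N"] exI[of _ W] exI[of _ Y] exI[of _ 0])
       (simp add: lam(1) W_def Y_def)
qed

lemma half_step_less_speed_ratio:
  fixes \<omega> rbar vbar T :: real
  assumes "0 < \<omega>" "0 < rbar" "0 < T"
    and "vbar = \<omega> * rbar * (cosh (\<omega> * T) + 1) / sinh (\<omega> * T)"
  shows "rbar < vbar / \<omega>"
proof -
  have "0 < sinh (\<omega> * T)"
    using assms by simp
  moreover have "sinh (\<omega> * T) < cosh (\<omega> * T) + 1"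
    using cosh_minus_sinh[of "\<omega> * T"] exp_gt_zero[of "- (\<omega> * T)"] by linarith
  ultimately have "rbar < rbar * (cosh (\<omega> * T) + 1) / sinh (\<omega> * T)"
    using assms(2) by (simp add: less_divide_eq)
  then show ?thesis
    using assms(1,4) by simp
qed

theorem proposition2:
  fixes g zc rbar vbar T ubar \<alpha> \<omega> \<xi> :: real
  assumes "g > 0" and "zc > 0"
    and "\<omega> = sqrt (g / zc)"
    and "rbar > 0" and "vbar > 0" and "T > 0" and "ubar > 0"
    and "vbar = \<omega> * rbar * (cosh (\<omega> * T) + 1) / sinh (\<omega> * T)"
    and "\<xi> = rbar * \<omega> / (vbar / \<omega> - rbar)"
    and "\<alpha> > 0"
  shows "lmi_feasible \<alpha> \<omega> T \<xi> ubar \<longleftrightarrow> \<alpha> > \<omega>"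
proof -
  have "0 < \<omega>"
    using assms(1-3) by simp
  moreover have "rbar < vbar / \<omega>"
    using \<open>0 < \<omega>\<close> assms(4,6,8) by (rule half_step_less_speed_ratio)
  ultimately have "0 \<le> \<xi>"
    using assms(4,9) by simp
  then show ?thesis
    using lmi_feasible_imp_less[of \<alpha> \<omega> T \<xi> ubar] lmi_feasible_if_less[of \<omega> \<alpha> T ubar \<xi>]
      \<open>0 < \<omega>\<close> assms(6,7,10) by auto
qed

end
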